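(* There exists a constant $C>0$ depending only on $n$ such that the following holds. Let $B_r\subseteq\mathbb{R}^n$ be a ball of radius $r$, $V\subseteq\mathbb{R}^n$ a linear subspace and $Z$ a transverse complete intersection with $\dim Z+\dim V\ge n$, such that for every $z\in Z\cap 2B_r$ the pair $T_zZ, V$ is quantitatively transverse. Then \[ V\cap B_r\cap N_\rho(Z)\subseteq N_{C\rho}(V\cap Z) \] for all $0<\rho\le c\,r$, where $c>0$ is a sufficiently small constant depending only on $n$.
   Context: A transverse complete intersection is $Z=Z(P_1,\dots,P_{n-m})=\{x\in\mathbb{R}^n:P_j(x)=0,\ 1\le j\le n-m\}$ for real polynomials $P_j$ such that $(\nabla P_1(z)\cdots\nabla P_{n-m}(z))$ has full rank $n-m$ at every $z\in Z$; it is a smooth $m$-dimensional submanifold with tangent spaces $T_zZ$. $N_\rho(E)$ is the $\rho$-neighbourhood of $E$, and $2B_r$ the ball concentric with $B_r$ of twice the radius. Fix a constant $c_{\mathrm{trans}}>0$ (depending only on $n$). A pair of linear subspaces $V_1,V_2$ of $\mathbb{R}^n$ with $\dim V_1+\dim V_2\ge n$ is quantitatively transverse if (i) $\dim(V_1\cap V_2)=\dim V_1+\dim V_2-n$ and (ii) $\angle(v_1,v_2)\ge c_{\mathrm{trans}}$ for all nonzero $v_j\in (V_1\cap V_2)^\perp\cap V_j$, $j=1,2$. *)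

theory Defs
  imports "HOL-Analysis.Analysis"
begin

definition grad :: "(real^'n \<Rightarrow> real) \<Rightarrow> real^'n \<Rightarrow> real^'n" where
  "grad f z = (\<chi> i. frechet_derivative f (at z) (axis i 1))"

definition zero_set :: "nat \<Rightarrow> (nat \<Rightarrow> real^'n \<Rightarrow> real) \<Rightarrow> (real^'n) set" where
  "zero_set k P = {x. \<forall>j<k. P j x = 0}"

definition transverse_complete_intersection ::
  "nat \<Rightarrow> (nat \<Rightarrow> real^'n \<Rightarrow> real) \<Rightarrow> bool" where
  "transverse_complete_intersection k P \<longleftrightarrow>
     (\<forall>j<k. real_polynomial_function (P j)) \<and>
     (\<forall>z\<in>zero_set k P. \<forall>a::nat \<Rightarrow> real.
        (\<Sum>j<k. a j *\<^sub>R grad (P j) z) = 0 \<longrightarrow> (\<forall>j<k. a j = 0))"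

definition tangent_space ::
  "nat \<Rightarrow> (nat \<Rightarrow> real^'n \<Rightarrow> real) \<Rightarrow> real^'n \<Rightarrow> (real^'n) set" where
  "tangent_space k P z = {v. \<forall>j<k. grad (P j) z \<bullet> v = 0}"

definition vec_angle :: "real^'n \<Rightarrow> real^'n \<Rightarrow> real" where
  "vec_angle u v = arccos ((u \<bullet> v) / (norm u * norm v))"

definition quant_transverse :: "real \<Rightarrow> (real^'n) set \<Rightarrow> (real^'n) set \<Rightarrow> bool" where
  "quant_transverse ctrans V1 V2 \<longleftrightarrow>
     int (dim (V1 \<inter> V2)) = int (dim V1) + int (dim V2) - int CARD('n) \<and>
     (\<forall>v1 v2. v1 \<in> orthogonal_comp (V1 \<inter> V2) \<inter> V1 \<and> v1 \<noteq> 0 \<and>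
              v2 \<in> orthogonal_comp (V1 \<inter> V2) \<inter> V2 \<and> v2 \<noteq> 0 \<longrightarrow>
              vec_angle v1 v2 \<ge> ctrans)"

definition nbhd :: "real \<Rightarrow> (real^'n) set \<Rightarrow> (real^'n) set" where
  "nbhd \<rho> E = {x. \<exists>e\<in>E. dist x e < \<rho>}"

end

theory Submission
  imports Defs
begin

text \<open>Let \<open>p \<in> V \<inter> B\<^sub>r\<close> lie within \<open>\<rho>\<close> of a point \<open>z \<in> Z\<close>, put \<open>s = min ctrans (pi/2)\<close>
  and \<open>K = 2 / sin s\<close>, and minimise \<open>\<phi> x = dist x V + dist x z / K\<close> over the points of \<open>Z\<close>
  within \<open>K \<rho>\<close> of \<open>z\<close>. Since \<open>\<phi> z < \<rho>\<close>, a minimiser \<open>w\<close> lies strictly inside that ball,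
  hence in \<open>2 B\<^sub>r\<close>. If \<open>w \<notin> V\<close>, let \<open>y\<close> be the component of \<open>w\<close> orthogonal to \<open>V\<close>.
  Quantitative transversality of \<open>T\<^sub>w Z\<close> and \<open>V\<close> yields \<open>u \<in> T\<^sub>w Z\<close> with \<open>u + y \<in> V\<close> and
  \<open>norm u * sin s \<le> norm y\<close>, and the inverse function theorem gives points of \<open>Z\<close> within
  \<open>o(t)\<close> of \<open>w + t u\<close>. Moving there lowers the distance to \<open>V\<close> by about \<open>t norm y\<close>, while
  the second term of \<open>\<phi>\<close> grows by at most \<open>t norm u / K \<le> t norm y / 2\<close>: a contradiction.
  So \<open>w \<in> V \<inter> Z\<close> and \<open>dist p w < (K + 1) \<rho>\<close>.\<close>

definition is_orthogonal_projection :: "'a::euclidean_space set \<Rightarrow> ('a \<Rightarrow> 'a) \<Rightarrow> bool" where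
  "is_orthogonal_projection S Q \<longleftrightarrow>
     linear Q \<and> (\<forall>x. Q x \<in> S) \<and> (\<forall>x s. s \<in> S \<longrightarrow> (x - Q x) \<bullet> s = 0)"

lemma orthogonal_projection_exists:
  fixes S :: "'a::euclidean_space set"
  assumes "subspace S"
  shows "\<exists>Q. is_orthogonal_projection S Q"
proof -
  obtain B where B: "B \<subseteq> S" "pairwise orthogonal B" "\<And>x. x \<in> B \<Longrightarrow> norm x = 1"
      "independent B" "span B = S"
    using orthonormal_basis_subspace[OF assms] by metis
  have fin: "finite B" using independent_bound B(4) by blast
  define Q where "Q x = (\<Sum>b\<in>B. (b \<bullet> x) *\<^sub>R b)" for x
  have "linear Q"
    unfolding Q_def by (rule linear_compose_sum) (simp add: linearI inner_add_right scaleR_add_left)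
  moreover have "Q x \<in> S" for x
    unfolding Q_def B(5)[symmetric] by (intro span_sum span_scale span_base)
  moreover have "(x - Q x) \<bullet> s = 0" if "s \<in> S" for x s
  proof -
    have QB: "Q x \<bullet> b' = b' \<bullet> x" if "b' \<in> B" for b'
    proof -
      have "Q x \<bullet> b' = (\<Sum>b\<in>B. (b \<bullet> x) * (b \<bullet> b'))"
        unfolding Q_def by (simp add: inner_sum_left)
      also have "\<dots> = (\<Sum>b\<in>{b'}. (b \<bullet> x) * (b \<bullet> b'))"
        by (rule sum.mono_neutral_right)
          (use fin that B(2) in \<open>auto simp: pairwise_def orthogonal_def\<close>)
      also have "\<dots> = b' \<bullet> x" using B(3)[OF that] by (simp add: dot_square_norm)
      finally show ?thesis .
    qed
    have "orthogonal (x - Q x) b" if "b \<in> B" for b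
      unfolding orthogonal_def inner_diff_left using QB[OF that] by (simp add: inner_commute)
    moreover have "s \<in> span B" using \<open>s \<in> S\<close> B(5) by simp
    ultimately have "orthogonal (x - Q x) s" using orthogonal_to_span by blast
    then show ?thesis by (simp add: orthogonal_def)
  qed
  ultimately show ?thesis unfolding is_orthogonal_projection_def by blast
qed

lemma orthogonal_projection_fixes:
  assumes "subspace S" "is_orthogonal_projection S Q" "s \<in> S"
  shows "Q s = s"
proof -
  have "s - Q s \<in> S"
    using assms by (simp add: subspace_diff is_orthogonal_projection_def)
  then have "(s - Q s) \<bullet> (s - Q s) = 0"
    using assms(2) by (simp add: is_orthogonal_projection_def)
  then show ?thesis by simp
qed

lemma orthogonal_projection_eq_0:
  assumes "is_orthogonal_projection S Q" "\<forall>s\<in>S. y \<bullet> s = 0"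
  shows "Q y = 0"
proof -
  have "Q y \<bullet> Q y = y \<bullet> Q y - (y - Q y) \<bullet> Q y" by (simp add: inner_diff_left)
  then show ?thesis using assms by (simp add: is_orthogonal_projection_def)
qed

lemma norm_diff_orthogonal_projection_le:
  assumes "is_orthogonal_projection S Q"
  shows "norm (x - Q x) \<le> norm x"
proof -
  have "orthogonal (x - Q x) (Q x)"
    using assms by (simp add: is_orthogonal_projection_def orthogonal_def)
  then have "norm x ^ 2 = norm (x - Q x) ^ 2 + norm (Q x) ^ 2"
    using norm_add_Pythagorean[of "x - Q x" "Q x"] by simp
  then show ?thesis by (simp add: power2_le_imp_le)
qed

lemma norm_diff_orthogonal_projection_le_dist:
  assumes "subspace S" "is_orthogonal_projection S Q" "p \<in> S"
  shows "norm (x - Q x) \<le> dist x p"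
proof -
  have "x - Q x = (x - p) - Q (x - p)"
    using orthogonal_projection_fixes[OF assms] assms(2)
    by (simp add: is_orthogonal_projection_def linear_diff)
  then show ?thesis using norm_diff_orthogonal_projection_le[OF assms(2)] by (metis dist_norm)
qed

lemma norm_mult_sin_le_norm_diff:
  fixes u v :: "'a::real_inner"
  assumes "u \<bullet> v \<le> cos s * (norm u * norm v)"
  shows "norm u * sin s \<le> norm (v - u)"
proof (cases "sin s \<le> 0")
  case True
  then have "norm u * sin s \<le> 0" by (simp add: mult_nonneg_nonpos)
  then show ?thesis using norm_ge_zero[of "v - u"] by linarith
next
  case False
  have "(sin s * norm u) ^ 2 = norm u ^ 2 - (cos s * norm u) ^ 2"
    by (simp add: sin_squared_eq power_mult_distrib algebra_simps)
  then have "(norm v - cos s * norm u) ^ 2 + (sin s * norm u) ^ 2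
      \<le> norm v ^ 2 - 2 * (u \<bullet> v) + norm u ^ 2"
    using assms by (simp add: power2_eq_square algebra_simps)
  also have "\<dots> = norm (v - u) ^ 2"
    by (simp add: power2_norm_eq_inner inner_diff_left inner_diff_right inner_commute)
  finally have "(sin s * norm u) ^ 2 \<le> norm (v - u) ^ 2"
    using zero_le_power2[of "norm v - cos s * norm u"] by linarith
  then show ?thesis using power2_le_imp_le[OF _ norm_ge_zero] by (simp add: mult.commute)
qed

lemma quant_transverse_sums_eq_UNIV:
  fixes T V :: "(real^'n) set"
  assumes "subspace T" "subspace V" "quant_transverse ct T V"
  shows "{x + y |x y. x \<in> T \<and> y \<in> V} = UNIV"
proof -
  let ?TV = "{x + y |x y. x \<in> T \<and> y \<in> V}"
  have "dim ?TV + dim (T \<inter> V) = dim T + dim V" using dim_sums_Int[OF assms(1,2)] .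
  moreover have "int (dim (T \<inter> V)) = int (dim T) + int (dim V) - int CARD('n)"
    using assms(3) unfolding quant_transverse_def by blast
  ultimately have "dim ?TV = DIM(real^'n)" by simp
  then have "span ?TV = UNIV" by (rule dim_eq_full[THEN iffD1])
  moreover have "span ?TV = ?TV" by (rule span_eq_iff[THEN iffD2, OF subspace_sums[OF assms(1,2)]])
  ultimately show ?thesis by simp
qed

lemma quant_transverse_inner_le:
  assumes "quant_transverse ct T V" "0 \<le> ct"
    and "u \<in> orthogonal_comp (T \<inter> V) \<inter> T" "v \<in> orthogonal_comp (T \<inter> V) \<inter> V"
  shows "u \<bullet> v \<le> cos (min ct (pi/2)) * (norm u * norm v)"
proof (cases "u = 0 \<or> v = 0")
  case False
  define c where "c = (u \<bullet> v) / (norm u * norm v)"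
  have nz: "norm u * norm v > 0" using False by simp
  have "\<bar>u \<bullet> v\<bar> \<le> norm u * norm v" by (rule Cauchy_Schwarz_ineq2)
  then have c: "-1 \<le> c" "c \<le> 1" unfolding c_def using nz
    by (auto simp: divide_le_eq le_divide_eq abs_le_iff)
  have "ct \<le> arccos c"
    using assms False unfolding quant_transverse_def vec_angle_def c_def by blast
  then have "cos (arccos c) \<le> cos (min ct (pi/2))"
    using assms(2) c by (intro cos_monotone_0_pi_le) (auto simp: arccos_ubound)
  then show ?thesis using c nz by (simp add: c_def divide_le_eq)
qed (auto simp: cos_ge_zero)

lemma quant_transverse_lift:
  fixes T V :: "(real^'n) set"
  assumes T: "subspace T" and V: "subspace V" and qt: "quant_transverse ct T V" and "0 \<le> ct"
    and y: "\<forall>v\<in>V. y \<bullet> v = 0"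
  shows "\<exists>u\<in>T. u + y \<in> V \<and> norm u * sin (min ct (pi/2)) \<le> norm y"
proof -
  define W where "W = T \<inter> V"
  have W: "subspace W" unfolding W_def using T V by (rule subspace_inter)
  obtain a b where ab: "a \<in> T" "b \<in> V" "- y = a + b"
    using quant_transverse_sums_eq_UNIV[OF T V qt] by blast
  obtain Q where Q: "is_orthogonal_projection W Q" using orthogonal_projection_exists[OF W] by blast
  text \<open>Removing from \<open>a\<close> its component in \<open>T \<inter> V\<close> puts both \<open>u\<close> and \<open>u + y\<close> orthogonal
    to \<open>T \<inter> V\<close>, where the angle bound applies.\<close>
  define u where "u = a - Q a"
  have QW: "Q a \<in> T" "Q a \<in> V" using Q by (auto simp: is_orthogonal_projection_def W_def)
  have uT: "u \<in> T" unfolding u_def using ab(1) QW T by (simp add: subspace_diff)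
  have y_eq: "y = - (a + b)" using arg_cong[OF ab(3), of uminus] by simp
  have uy: "u + y = - (Q a + b)" unfolding u_def y_eq by (simp add: algebra_simps)
  have "Q a + b \<in> V" using QW ab(2) V by (simp add: subspace_add)
  then have uyV: "u + y \<in> V" unfolding uy by (rule subspace_neg[OF V])
  have "u \<bullet> w = 0" if "w \<in> W" for w
    using Q that unfolding u_def is_orthogonal_projection_def by blast
  then have "u \<in> orthogonal_comp W \<inter> T" "u + y \<in> orthogonal_comp W \<inter> V"
    using uT uyV y
    by (auto simp: orthogonal_comp_def orthogonal_def inner_commute inner_add_right W_def)
  then have "u \<bullet> (u + y) \<le> cos (min ct (pi/2)) * (norm u * norm (u + y))"
    using quant_transverse_inner_le[OF qt \<open>0 \<le> ct\<close>] unfolding W_def by blast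
  then have "norm u * sin (min ct (pi/2)) \<le> norm (u + y - u)"
    by (rule norm_mult_sin_le_norm_diff)
  then show ?thesis using uT uyV by auto
qed

lemma grad_eqI:
  assumes "(f has_derivative (\<lambda>v. G \<bullet> v)) (at x)"
  shows "grad f x = G"
  using frechet_derivative_at[OF assms, symmetric] unfolding grad_def
  by (simp add: vec_eq_iff inner_axis)

lemma real_polynomial_function_has_continuous_gradient:
  fixes p :: "'a::euclidean_space \<Rightarrow> real"
  assumes "real_polynomial_function p"
  shows "\<exists>G. continuous_on UNIV G \<and> (\<forall>x. (p has_derivative (\<lambda>v. G x \<bullet> v)) (at x))"
  using assms
proof (induction p rule: real_polynomial_function.induct)
  case (linear f)
  have "f = (\<lambda>v. adjoint f 1 \<bullet> v)"
    using adjoint_works[of f _ 1] linear.hyps by (auto simp: bounded_linear.linear inner_commute)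
  then show ?case
    using bounded_linear_imp_has_derivative[OF linear.hyps] by (metis continuous_on_const)
next
  case (const c)
  have "((\<lambda>x. c) has_derivative (\<lambda>v. 0 \<bullet> v)) (at x)" for x :: 'a by simp
  then show ?case by (intro exI[of _ "\<lambda>x. 0"] conjI continuous_on_const) auto
next
  case (add f g)
  then obtain F G where F: "continuous_on UNIV F" "\<And>x. (f has_derivative (\<lambda>v. F x \<bullet> v)) (at x)"
    and G: "continuous_on UNIV G" "\<And>x. (g has_derivative (\<lambda>v. G x \<bullet> v)) (at x)" by blast
  have "((\<lambda>x. f x + g x) has_derivative (\<lambda>v. (F x + G x) \<bullet> v)) (at x)" for x
    by (rule has_derivative_eq_rhs[OF has_derivative_add[OF F(2) G(2)]]) (simp add: inner_add_left)
  moreover have "continuous_on UNIV (\<lambda>x. F x + G x)" using F(1) G(1) by (rule continuous_on_add)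
  ultimately show ?case by blast
next
  case (mult f g)
  then obtain F G where F: "continuous_on UNIV F" "\<And>x. (f has_derivative (\<lambda>v. F x \<bullet> v)) (at x)"
    and G: "continuous_on UNIV G" "\<And>x. (g has_derivative (\<lambda>v. G x \<bullet> v)) (at x)" by blast
  have "continuous_on UNIV f" "continuous_on UNIV g"
    using mult.hyps
    by (auto intro!: continuous_at_imp_continuous_on continuous_real_polymonial_function)
  then have "continuous_on UNIV (\<lambda>x. f x *\<^sub>R G x + g x *\<^sub>R F x)"
    using F(1) G(1) by (intro continuous_on_add continuous_on_scaleR)
  moreover have
    "((\<lambda>x. f x * g x) has_derivative (\<lambda>v. (f x *\<^sub>R G x + g x *\<^sub>R F x) \<bullet> v)) (at x)" for x
    by (rule has_derivative_eq_rhs[OF has_derivative_mult[OF F(2) G(2)]])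
      (simp add: inner_add_left algebra_simps)
  ultimately show ?case by blast
qed

lemma closed_zero_set:
  assumes "\<And>j. j < k \<Longrightarrow> continuous_on UNIV (P j)"
  shows "closed (zero_set k P)"
proof -
  have "zero_set k P = (\<Inter>j\<in>{..<k}. {x. P j x = 0})" unfolding zero_set_def by auto
  moreover have "closed {x. P j x = 0}" if "j < k" for j
    using assms[OF that] by (intro closed_Collect_eq continuous_on_const)
  ultimately show ?thesis by (simp add: closed_INT)
qed

lemma compact_zero_set_inter_cball:
  assumes "transverse_complete_intersection k P"
  shows "compact (zero_set k P \<inter> cball z R)"
proof -
  have "\<forall>j<k. real_polynomial_function (P j)"
    using assms unfolding transverse_complete_intersection_def by blast
  then have "closed (zero_set k P)"
    using continuous_real_polymonial_function continuous_at_imp_continuous_on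
    by (intro closed_zero_set) blast
  then show ?thesis by (intro closed_Int_compact) auto
qed

lemma subspace_tangent_space: "subspace (tangent_space k P w)"
  unfolding tangent_space_def subspace_def by (auto simp: inner_add_right)

lemma onorm_sum_inner_scaleR_le:
  fixes a :: "nat \<Rightarrow> 'a::{real_inner, perfect_space}" and b :: "nat \<Rightarrow> 'b::real_normed_vector"
  shows "onorm (\<lambda>v. \<Sum>j<k. (a j \<bullet> v) *\<^sub>R b j) \<le> (\<Sum>j<k. norm (a j) * norm (b j))"
proof (rule onorm_le)
  fix v
  have "norm (\<Sum>j<k. (a j \<bullet> v) *\<^sub>R b j) \<le> (\<Sum>j<k. \<bar>a j \<bullet> v\<bar> * norm (b j))"
    using norm_sum[of "\<lambda>j. (a j \<bullet> v) *\<^sub>R b j" "{..<k}"] by simp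
  also have "\<dots> \<le> (\<Sum>j<k. norm (a j) * norm v * norm (b j))"
    by (intro sum_mono mult_right_mono Cauchy_Schwarz_ineq2 norm_ge_zero)
  also have "\<dots> = (\<Sum>j<k. norm (a j) * norm (b j)) * norm v"
    by (subst sum_distrib_right) (simp add: ac_simps)
  finally show "norm (\<Sum>j<k. (a j \<bullet> v) *\<^sub>R b j) \<le> (\<Sum>j<k. norm (a j) * norm (b j)) * norm v" .
qed

lemma continuous_onorm_sum_inner_scaleR:
  fixes G :: "nat \<Rightarrow> 'c::metric_space \<Rightarrow> 'a::{real_inner, perfect_space}"
    and b :: "nat \<Rightarrow> 'b::real_normed_vector"
  assumes "\<And>j. j < k \<Longrightarrow> continuous_on UNIV (G j)" and "e > 0"
  shows "\<exists>d>0. \<forall>x. dist w x < d \<longrightarrow>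
           onorm (\<lambda>v. (\<Sum>j<k. (G j x \<bullet> v) *\<^sub>R b j) - (\<Sum>j<k. (G j w \<bullet> v) *\<^sub>R b j)) < e"
proof -
  define D where "D x = (\<Sum>j<k. norm (G j x - G j w) * norm (b j))" for x
  have "continuous_on UNIV D" unfolding D_def using assms(1) by (intro continuous_intros) auto
  moreover have "D w = 0" unfolding D_def by simp
  ultimately obtain d where d: "d > 0" "\<And>x. dist x w < d \<Longrightarrow> D x < e"
    using \<open>e > 0\<close> unfolding continuous_on_iff by (metis UNIV_I dist_real_def diff_zero abs_less_iff)
  have bound: "onorm (\<lambda>v. (\<Sum>j<k. (G j x \<bullet> v) *\<^sub>R b j) - (\<Sum>j<k. (G j w \<bullet> v) *\<^sub>R b j)) \<le> D x" for x
    using onorm_sum_inner_scaleR_le[where a = "\<lambda>j. G j x - G j w" and b = b and k = k]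
    unfolding D_def by (simp add: inner_diff_left scaleR_diff_left sum_subtractf)
  have "onorm (\<lambda>v. (\<Sum>j<k. (G j x \<bullet> v) *\<^sub>R b j) - (\<Sum>j<k. (G j w \<bullet> v) *\<^sub>R b j)) < e"
    if "dist w x < d" for x
    using bound[of x] d(2)[of x] that by (simp add: dist_commute)
  then show ?thesis using d(1) by blast
qed

lemma sum_scaleR_eq_0_if_orthogonal:
  fixes g :: "nat \<Rightarrow> 'a::real_inner"
  assumes "\<forall>j<k. g j \<bullet> (\<Sum>i<k. c i *\<^sub>R g i) = 0"
  shows "(\<Sum>i<k. c i *\<^sub>R g i) = 0"
proof -
  have "(\<Sum>i<k. c i *\<^sub>R g i) \<bullet> (\<Sum>i<k. c i *\<^sub>R g i) = (\<Sum>i<k. c i * (g i \<bullet> (\<Sum>i<k. c i *\<^sub>R g i)))"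
    by (simp add: inner_sum_left)
  then show ?thesis using assms by simp
qed

lemma inj_sum_inner_scaleR_plus_projection:
  fixes g :: "nat \<Rightarrow> 'a::euclidean_space" and k :: nat
  defines "T \<equiv> {v. \<forall>j<k. g j \<bullet> v = 0}"
  assumes L: "is_orthogonal_projection T L"
  shows "inj (\<lambda>v. (\<Sum>j<k. (g j \<bullet> v) *\<^sub>R g j) + L v)"
proof -
  have T: "subspace T" unfolding T_def subspace_def by (auto simp: inner_add_right)
  have "linear (\<lambda>v. (g j \<bullet> v) *\<^sub>R g j)" for j
    by (rule linearI) (simp_all add: inner_add_right scaleR_add_left)
  then have "linear (\<lambda>v. (\<Sum>j<k. (g j \<bullet> v) *\<^sub>R g j) + L v)"
    using L unfolding is_orthogonal_projection_def
    by (intro linear_compose_add linear_compose_sum) auto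
  moreover have "v = 0" if v: "(\<Sum>j<k. (g j \<bullet> v) *\<^sub>R g j) + L v = 0" for v
  proof -
    have "(\<Sum>j<k. (g j \<bullet> v) *\<^sub>R g j) = - L v" using v by (simp add: eq_neg_iff_add_eq_0)
    moreover have "- L v \<in> T" using L T by (simp add: is_orthogonal_projection_def subspace_neg)
    ultimately have A: "(\<Sum>j<k. (g j \<bullet> v) *\<^sub>R g j) = 0"
      by (intro sum_scaleR_eq_0_if_orthogonal) (simp add: T_def)
    have "(\<Sum>j<k. (g j \<bullet> v)\<^sup>2) = (\<Sum>j<k. (g j \<bullet> v) *\<^sub>R g j) \<bullet> v"
      by (simp add: inner_sum_left power2_eq_square)
    then have "\<forall>j\<in>{..<k}. (g j \<bullet> v)\<^sup>2 = 0" using A by (simp add: sum_nonneg_eq_0_iff)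
    then have "v \<in> T" unfolding T_def by simp
    then have "L v = v" using orthogonal_projection_fixes[OF T L] by blast
    then show ?thesis using v A by simp
  qed
  ultimately show ?thesis using linear_inj_iff_eq_0 by blast
qed

lemma has_derivative_solutions_along_direction:
  fixes H :: "'a::euclidean_space \<Rightarrow> 'a"
  assumes der: "\<And>x. (H has_derivative H' x) (at x)"
    and inj: "inj (H' w)"
    and cont: "\<And>e. e > 0 \<Longrightarrow> \<exists>d>0. \<forall>x. dist w x < d \<longrightarrow> onorm (\<lambda>v. H' x v - H' w v) < e"
    and "\<epsilon> > 0"
  shows "\<exists>\<delta>>0. \<forall>t. 0 < t \<and> t < \<delta> \<longrightarrow>
           (\<exists>x. H x = H w + t *\<^sub>R H' w u \<and> norm (x - w - t *\<^sub>R u) \<le> \<epsilon> * t)"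
proof -
  have lin: "linear (H' w)" using der[of w] has_derivative_linear by blast
  obtain gi where gi: "linear gi" "gi \<circ> H' w = id"
    using linear_injective_left_inverse[OF lin inj] by blast
  have gi': "H' w \<circ> gi = id" using linear_inverse_left[OF lin gi(1)] gi(2) by simp
  have bl: "bounded_linear gi" using gi(1) linear_conv_bounded_linear by blast
  obtain r where r: "r > 0" "inj_on H (ball w r)"
    using has_derivative_locally_injective[of w UNIV gi H', OF _ _ bl gi(2) der cont] by auto
  have contH: "continuous_on UNIV H"
    using der has_derivative_continuous continuous_at_imp_continuous_on by blast
  have "H w \<in> interior (H ` ball w r)"
    using sussmann_open_mapping[OF open_UNIV contH _ der bl gi', of "ball w r"] r(1) by simp
  then obtain \<delta>0 where \<delta>0: "\<delta>0 > 0" "ball (H w) \<delta>0 \<subseteq> H ` ball w r"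
    using mem_interior by metis
  define Hinv where "Hinv = inv_into (ball w r) H"
  have Hinv: "Hinv (H x) = x" if "x \<in> ball w r" for x
    unfolding Hinv_def using inv_into_f_f[OF r(2) that] .
  have "(Hinv has_derivative gi) (at (H w))"
    by (rule has_derivative_inverse_strong
        [OF open_ball _ continuous_on_subset[OF contH] Hinv der gi'])
      (use r(1) in auto)
  moreover define M where "M = norm (H' w u) + 1"
  moreover have M: "M > 0" unfolding M_def by (simp add: add_nonneg_pos)
  ultimately obtain d where d: "d > 0"
    "\<And>y. norm (y - H w) < d \<Longrightarrow> norm (Hinv y - Hinv (H w) - gi (y - H w)) \<le> (\<epsilon> / M) * norm (y - H w)"
    using \<open>\<epsilon> > 0\<close> unfolding has_derivative_at_alt by (meson divide_pos_pos)
  have "\<exists>x. H x = H w + t *\<^sub>R H' w u \<and> norm (x - w - t *\<^sub>R u) \<le> \<epsilon> * t"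
    if t: "0 < t" "t < min d \<delta>0 / M" for t
  proof -
    define y where "y = H w + t *\<^sub>R H' w u"
    have ny: "norm (y - H w) \<le> t * M" unfolding y_def M_def using t by (simp add: mult_left_mono)
    also have "\<dots> < min d \<delta>0" using t M by (simp add: less_divide_eq mult.commute)
    finally have "y \<in> ball (H w) \<delta>0" "norm (y - H w) < d"
      by (auto simp: dist_norm norm_minus_commute)
    then obtain x where x: "x \<in> ball w r" "H x = y" using \<delta>0(2) by blast
    have "gi (y - H w) = t *\<^sub>R u"
      unfolding y_def using gi by (simp add: linear_scale pointfree_idE)
    then have "norm (x - w - t *\<^sub>R u) \<le> (\<epsilon> / M) * norm (y - H w)"
      using d(2)[OF \<open>norm (y - H w) < d\<close>] Hinv[OF x(1)] Hinv[of w] r(1) x(2) by simp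
    also have "\<dots> \<le> \<epsilon> * t"
      using ny M \<open>\<epsilon> > 0\<close> by (simp add: field_simps mult_left_mono)
    finally show ?thesis using x(2) y_def by blast
  qed
  moreover have "min d \<delta>0 / M > 0" using d(1) \<delta>0(1) M by simp
  ultimately show ?thesis by blast
qed

lemma tangent_vector_approximated_in_zero_set:
  fixes P :: "nat \<Rightarrow> real^'n \<Rightarrow> real" and G :: "nat \<Rightarrow> real^'n \<Rightarrow> real^'n"
  assumes der: "\<And>j x. j < k \<Longrightarrow> (P j has_derivative (\<lambda>v. G j x \<bullet> v)) (at x)"
    and contG: "\<And>j. j < k \<Longrightarrow> continuous_on UNIV (G j)"
    and w: "w \<in> zero_set k P"
    and indep: "\<forall>a::nat \<Rightarrow> real. (\<Sum>j<k. a j *\<^sub>R grad (P j) w) = 0 \<longrightarrow> (\<forall>j<k. a j = 0)"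
    and u: "u \<in> tangent_space k P w"
    and "\<epsilon> > 0"
  shows "\<exists>\<delta>>0. \<forall>t. 0 < t \<and> t < \<delta> \<longrightarrow> (\<exists>x\<in>zero_set k P. norm (x - w - t *\<^sub>R u) \<le> \<epsilon> * t)"
proof -
  define g where "g j = G j w" for j
  have grad: "grad (P j) w = g j" if "j < k" for j using grad_eqI[OF der[OF that]] g_def by simp
  define T where "T = tangent_space k P w"
  have T_eq: "T = {v. \<forall>j<k. g j \<bullet> v = 0}" unfolding T_def tangent_space_def using grad by auto
  obtain L where L: "is_orthogonal_projection T L"
    using orthogonal_projection_exists[OF subspace_tangent_space] T_def by blast
  have lin: "linear L" and LT: "\<And>x. L x \<in> T" using L by (simp_all add: is_orthogonal_projection_def)
  text \<open>Zeros of \<open>P\<close> near \<open>w\<close> are the solutions of \<open>H x \<in> T\<close>; the projection term makes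
    the derivative of \<open>H\<close> at \<open>w\<close> invertible.\<close>
  define H where "H x = (\<Sum>j<k. P j x *\<^sub>R g j) + L (x - w)" for x
  define H' where "H' x v = (\<Sum>j<k. (G j x \<bullet> v) *\<^sub>R g j) + L v" for x v
  have "((\<lambda>x. L (x - w)) has_derivative L) (at x)" for x
    using bounded_linear.has_derivative[OF linear_conv_bounded_linear[THEN iffD1, OF lin]
        has_derivative_diff[OF has_derivative_ident has_derivative_const]] by simp
  then have derH: "(H has_derivative H' x) (at x)" for x
    unfolding H_def[abs_def] H'_def[abs_def]
    by (intro has_derivative_add has_derivative_sum has_derivative_scaleR_left der) auto
  have injH': "inj (H' w)"
    using inj_sum_inner_scaleR_plus_projection[where g = g and k = k and L = L] L T_eq
    unfolding H'_def g_def by simp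
  have contH': "\<exists>d>0. \<forall>x. dist w x < d \<longrightarrow> onorm (\<lambda>v. H' x v - H' w v) < e" if "e > 0" for e
    using continuous_onorm_sum_inner_scaleR[OF contG that, where b = g]
    unfolding H'_def g_def by simp
  obtain \<delta> where \<delta>: "\<delta> > 0"
    "\<And>t. 0 < t \<and> t < \<delta> \<Longrightarrow> \<exists>x. H x = H w + t *\<^sub>R H' w u \<and> norm (x - w - t *\<^sub>R u) \<le> \<epsilon> * t"
    using has_derivative_solutions_along_direction[OF derH injH' contH' \<open>\<epsilon> > 0\<close>] by blast
  have "H w = 0" using w lin unfolding H_def zero_set_def by (simp add: linear_0)
  moreover have "H' w u = L u" using u unfolding H'_def g_def T_def[symmetric] T_eq by simp
  ultimately have "\<exists>x\<in>zero_set k P. norm (x - w - t *\<^sub>R u) \<le> \<epsilon> * t" if t: "0 < t" "t < \<delta>" for t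
  proof -
    obtain x where x: "H x = t *\<^sub>R L u" "norm (x - w - t *\<^sub>R u) \<le> \<epsilon> * t"
      using \<delta>(2) t \<open>H w = 0\<close> \<open>H' w u = L u\<close> by auto
    have "(\<Sum>j<k. P j x *\<^sub>R g j) = t *\<^sub>R L u - L (x - w)" using x(1) unfolding H_def
      by (simp add: eq_diff_eq)
    also have "\<dots> \<in> T" using LT subspace_tangent_space T_def by (metis subspace_diff subspace_scale)
    finally have "(\<Sum>j<k. P j x *\<^sub>R g j) = 0"
      by (intro sum_scaleR_eq_0_if_orthogonal) (simp add: T_eq)
    then have "\<forall>j<k. P j x = 0" using indep[rule_format, of "\<lambda>j. P j x"] grad by simp
    then show ?thesis using x(2) by (auto simp: zero_set_def)
  qed
  then show ?thesis using \<delta>(1) by blast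
qed

lemma two_le_of_two_le_mult_sin:
  assumes "0 \<le> ct" "2 \<le> K * sin (min ct (pi/2))"
  shows "2 \<le> K"
proof -
  have "0 \<le> sin (min ct (pi/2))" using assms(1) pi_gt_zero
    by (intro sin_ge_zero) (auto simp: min_def)
  then show ?thesis
    using assms(2) mult_left_le[OF sin_le_one, of K] mult_nonpos_nonneg[of K] by (smt (verit))
qed

lemma transverse_complete_intersection_tangent_approximation:
  fixes P :: "nat \<Rightarrow> real^'n \<Rightarrow> real"
  assumes tci: "transverse_complete_intersection k P"
    and "w \<in> zero_set k P" "u \<in> tangent_space k P w" "\<epsilon> > 0"
  shows "\<exists>\<delta>>0. \<forall>t. 0 < t \<and> t < \<delta> \<longrightarrow> (\<exists>x\<in>zero_set k P. norm (x - w - t *\<^sub>R u) \<le> \<epsilon> * t)"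
proof -
  have "\<forall>j. \<exists>G. j < k \<longrightarrow> continuous_on UNIV G \<and> (\<forall>x. (P j has_derivative (\<lambda>v. G x \<bullet> v)) (at x))"
    using tci real_polynomial_function_has_continuous_gradient
    unfolding transverse_complete_intersection_def by (meson conjunct1)
  then obtain G where G: "\<And>j. j < k \<Longrightarrow> continuous_on UNIV (G j)"
    "\<And>j x. j < k \<Longrightarrow> (P j has_derivative (\<lambda>v. G j x \<bullet> v)) (at x)"
    by metis
  have "\<forall>a::nat \<Rightarrow> real. (\<Sum>j<k. a j *\<^sub>R grad (P j) w) = 0 \<longrightarrow> (\<forall>j<k. a j = 0)"
    using tci \<open>w \<in> zero_set k P\<close> unfolding transverse_complete_intersection_def by blast
  then show ?thesis
    using tangent_vector_approximated_in_zero_set[where k = k and P = P and G = G, OF G(2) G(1)]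
      assms(2-4)
    by blast
qed

lemma norm_diff_orthogonal_projection_along_lift:
  fixes w u e :: "'a::euclidean_space"
  assumes V: "subspace V" and Q: "is_orthogonal_projection V Q"
    and u: "u + (w - Q w) \<in> V" and t: "0 \<le> t" "t \<le> 1"
  shows "norm (w + t *\<^sub>R u + e - Q (w + t *\<^sub>R u + e)) \<le> (1 - t) * norm (w - Q w) + norm e"
proof -
  define y where "y = w - Q w"
  have "\<forall>v\<in>V. y \<bullet> v = 0" using Q unfolding y_def is_orthogonal_projection_def by blast
  then have "Q u = u + y"
    using orthogonal_projection_fixes[OF V Q u[folded y_def]] orthogonal_projection_eq_0[OF Q] Q
    by (simp add: is_orthogonal_projection_def linear_add)
  moreover have "linear Q" using Q by (simp add: is_orthogonal_projection_def)
  moreover have "Q w = w - y" by (simp add: y_def)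
  ultimately have "w + t *\<^sub>R u + e - Q (w + t *\<^sub>R u + e) = (1 - t) *\<^sub>R y + (e - Q e)"
    by (simp add: linear_add linear_scale algebra_simps)
  then have "norm (w + t *\<^sub>R u + e - Q (w + t *\<^sub>R u + e)) \<le> norm ((1 - t) *\<^sub>R y) + norm (e - Q e)"
    by (metis norm_triangle_ineq)
  also have "\<dots> \<le> (1 - t) * norm y + norm e"
    using norm_diff_orthogonal_projection_le[OF Q, of e] t by simp
  finally show ?thesis unfolding y_def .
qed

lemma zero_set_descent_towards_subspace:
  fixes P :: "nat \<Rightarrow> real^'n \<Rightarrow> real"
  assumes tci: "transverse_complete_intersection k P"
    and V: "subspace V" and Q: "is_orthogonal_projection V Q"
    and w: "w \<in> zero_set k P" "w \<notin> V"
    and qt: "quant_transverse ct (tangent_space k P w) V" and "0 \<le> ct"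
    and K: "2 \<le> K * sin (min ct (pi/2))"
    and "\<gamma> > 0"
  shows "\<exists>x\<in>zero_set k P. dist x w < \<gamma> \<and> norm (x - Q x) + dist x w / K < norm (w - Q w)"
proof -
  define y where "y = w - Q w"
  have y_perp: "\<forall>v\<in>V. y \<bullet> v = 0" using Q unfolding y_def is_orthogonal_projection_def by blast
  have "Q w \<in> V" using Q by (simp add: is_orthogonal_projection_def)
  then have ny: "norm y > 0" using w(2) unfolding y_def by auto
  have "K \<ge> 2" using two_le_of_two_le_mult_sin[OF \<open>0 \<le> ct\<close> K] .
  obtain u where u: "u \<in> tangent_space k P w" "u + y \<in> V" "norm u * sin (min ct (pi/2)) \<le> norm y"
    using quant_transverse_lift[OF subspace_tangent_space V qt \<open>0 \<le> ct\<close> y_perp] by blast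
  have "norm u * 2 \<le> K * (norm u * sin (min ct (pi/2)))"
    using mult_left_mono[OF K norm_ge_zero[of u]] by (simp add: ac_simps)
  also have "\<dots> \<le> K * norm y" using u(3) \<open>K \<ge> 2\<close> by (simp add: mult_left_mono)
  finally have nu: "norm u / K \<le> norm y / 2" using \<open>K \<ge> 2\<close> by (simp add: field_simps)
  define \<epsilon> where "\<epsilon> = norm y / 8"
  obtain \<delta> where \<delta>: "\<delta> > 0" "\<And>t. 0 < t \<and> t < \<delta> \<Longrightarrow> \<exists>x\<in>zero_set k P. norm (x - w - t *\<^sub>R u) \<le> \<epsilon> * t"
    using transverse_complete_intersection_tangent_approximation[OF tci w(1) u(1), of \<epsilon>] ny
    unfolding \<epsilon>_def by auto
  define M where "M = norm u + \<epsilon> + 1"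
  have M: "M > 0" using ny by (simp add: M_def \<epsilon>_def add_nonneg_pos)
  define t where "t = min (\<delta>/2) (min (1/2) (\<gamma> / (2 * M)))"
  have "t \<le> \<delta>/2" "t \<le> 1/2" "t \<le> \<gamma> / (2 * M)" unfolding t_def by auto
  moreover have "0 < t" using \<delta>(1) \<open>\<gamma> > 0\<close> M by (simp add: t_def)
  ultimately have t: "0 < t" "t < \<delta>" "t \<le> 1/2" "t * M < \<gamma>"
    using \<delta>(1) \<open>\<gamma> > 0\<close> M by (auto simp: le_divide_eq)
  then obtain x where x: "x \<in> zero_set k P" "norm (x - w - t *\<^sub>R u) \<le> \<epsilon> * t" using \<delta>(2) by blast
  define e where "e = x - w - t *\<^sub>R u"
  have ne: "norm e \<le> \<epsilon> * t" using x(2) by (simp add: e_def)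
  have dist_xw: "dist x w \<le> t * norm u + \<epsilon> * t"
    using norm_triangle_ineq[of "t *\<^sub>R u" e] ne t(1) by (simp add: e_def dist_norm)
  have "x = w + t *\<^sub>R u + e" by (simp add: e_def)
  then have "norm (x - Q x) \<le> norm y - t * norm y + \<epsilon> * t"
    using norm_diff_orthogonal_projection_along_lift[OF V Q u(2)[unfolded y_def], of t e] ne t(1,3)
    unfolding y_def by (simp add: algebra_simps)
  moreover have "dist x w / K \<le> t * norm u / K + \<epsilon> * t / K"
    using divide_right_mono[OF dist_xw, of K] \<open>K \<ge> 2\<close> by (simp add: add_divide_distrib)
  moreover have "\<epsilon> * t / K \<le> \<epsilon> * t / 2"
    using \<open>K \<ge> 2\<close> t(1) ny by (intro divide_left_mono) (auto simp: \<epsilon>_def)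
  moreover have "t * norm u / K \<le> t * norm y / 2" using mult_left_mono[OF nu] t(1) by simp
  ultimately have "norm (x - Q x) + dist x w / K \<le> norm y - t * norm y / 2 + 3 * (\<epsilon> * t) / 2"
    by linarith
  also have "\<dots> < norm y" using t(1) ny by (simp add: \<epsilon>_def)
  moreover have "dist x w < \<gamma>" using dist_xw t(1,4) by (simp add: M_def algebra_simps)
  ultimately show ?thesis using x(1) unfolding y_def by auto
qed

lemma zero_set_point_near_subspace_intersection:
  fixes P :: "nat \<Rightarrow> real^'n \<Rightarrow> real"
  assumes tci: "transverse_complete_intersection k P" and V: "subspace V"
    and qt: "\<forall>z \<in> zero_set k P \<inter> ball x0 (2 * r). quant_transverse ct (tangent_space k P z) V"
    and "0 \<le> ct" and K: "2 \<le> K * sin (min ct (pi/2))"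
    and \<rho>: "(K + 1) * \<rho> \<le> r"
    and p: "p \<in> V" "dist x0 p < r"
    and z: "z \<in> zero_set k P" "dist p z < \<rho>"
  shows "\<exists>e\<in>V \<inter> zero_set k P. dist p e < (K + 1) * \<rho>"
proof -
  have "K > 0" using two_le_of_two_le_mult_sin[OF \<open>0 \<le> ct\<close> K] by simp
  obtain Q where Q: "is_orthogonal_projection V Q" using orthogonal_projection_exists[OF V] by blast
  define \<phi> where "\<phi> x = norm (x - Q x) + dist x z / K" for x
  define S where "S = zero_set k P \<inter> cball z (K * \<rho>)"
  have "compact S" unfolding S_def using tci by (rule compact_zero_set_inter_cball)
  have "continuous_on S Q"
    using Q linear_conv_bounded_linear
    by (intro linear_continuous_on) (auto simp: is_orthogonal_projection_def)
  then have cont: "continuous_on S \<phi>" unfolding \<phi>_def using \<open>K > 0\<close>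
    by (intro continuous_intros) auto
  have "0 \<le> \<rho>" using zero_le_dist[of p z] z(2) by linarith
  then have zS: "z \<in> S" unfolding S_def using z(1) \<open>K > 0\<close> by simp
  obtain w where w: "w \<in> S" "\<And>x. x \<in> S \<Longrightarrow> \<phi> w \<le> \<phi> x"
    using continuous_attains_inf[OF \<open>compact S\<close> _ cont] zS by blast
  have "norm (z - Q z) \<le> dist z p" by (rule norm_diff_orthogonal_projection_le_dist[OF V Q p(1)])
  then have "\<phi> z < \<rho>" using z(2) by (simp add: \<phi>_def dist_commute)
  then have "dist w z / K < \<rho>"
    using w(2)[OF zS] norm_ge_zero[of "w - Q w"] unfolding \<phi>_def by linarith
  then have dwz: "dist w z < K * \<rho>" using \<open>K > 0\<close> by (simp add: divide_less_eq mult.commute)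
  have "w \<in> V"
  proof (rule ccontr)
    assume "w \<notin> V"
    have "dist x0 w \<le> dist x0 p + dist p z + dist z w"
      using dist_triangle[of x0 w p] dist_triangle[of p w z] by linarith
    then have "w \<in> ball x0 (2 * r)"
      using p(2) z(2) dwz \<rho> by (simp add: dist_commute algebra_simps)
    then obtain x where x: "x \<in> zero_set k P" "dist x w < K * \<rho> - dist w z"
      "norm (x - Q x) + dist x w / K < norm (w - Q w)"
      using zero_set_descent_towards_subspace
          [OF tci V Q _ \<open>w \<notin> V\<close> _ \<open>0 \<le> ct\<close> K, of "K * \<rho> - dist w z"]
        qt w(1) dwz unfolding S_def by auto
    have xS: "x \<in> S" unfolding S_def using x(1,2) dist_triangle[of x z w]
      by (simp add: dist_commute)
    have "dist x z / K \<le> dist x w / K + dist w z / K"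
      using divide_right_mono[OF dist_triangle[of x z w]] \<open>K > 0\<close> by (simp add: add_divide_distrib)
    then have "\<phi> x < \<phi> w" using x(3) unfolding \<phi>_def by linarith
    then show False using w(2)[OF xS] by simp
  qed
  moreover have "dist p w < (K + 1) * \<rho>"
    using dist_triangle[of p w z] z(2) dwz by (simp add: dist_commute algebra_simps)
  ultimately show ?thesis using w(1) unfolding S_def by blast
qed

theorem lemma8p8:
  fixes ctrans :: real
  assumes "ctrans > 0"
  shows "\<exists>C>0. \<exists>c>0. \<forall>(x0::real^'n) r (V::(real^'n) set) m (P::nat \<Rightarrow> real^'n \<Rightarrow> real) \<rho>.
     r > 0 \<longrightarrow> subspace V \<longrightarrow> m \<le> CARD('n) \<longrightarrow>
     transverse_complete_intersection (CARD('n) - m) P \<longrightarrow>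
     m + dim V \<ge> CARD('n) \<longrightarrow>
     (\<forall>z \<in> zero_set (CARD('n) - m) P \<inter> ball x0 (2 * r).
        quant_transverse ctrans (tangent_space (CARD('n) - m) P z) V) \<longrightarrow>
     0 < \<rho> \<longrightarrow> \<rho> \<le> c * r \<longrightarrow>
     V \<inter> ball x0 r \<inter> nbhd \<rho> (zero_set (CARD('n) - m) P)
       \<subseteq> nbhd (C * \<rho>) (V \<inter> zero_set (CARD('n) - m) P)"
proof -
  define K where "K = 2 / sin (min ctrans (pi/2))"
  have "sin (min ctrans (pi/2)) > 0" using assms pi_gt_zero
    by (intro sin_gt_zero) (auto simp: min_def)
  then have K: "2 \<le> K * sin (min ctrans (pi/2))" and "K > 0" by (simp_all add: K_def)
  show ?thesis
  proof (rule exI[of _ "K + 1"], intro conjI exI[of _ "1 / (K + 1)"] allI impI subsetI)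
    fix x0 r V m P \<rho> and p :: "real^'n"
    let ?k = "CARD('n) - m"
    assume "r > 0" "subspace V" "m \<le> CARD('n)" "transverse_complete_intersection ?k P"
      "m + dim V \<ge> CARD('n)"
      "\<forall>z \<in> zero_set ?k P \<inter> ball x0 (2 * r). quant_transverse ctrans (tangent_space ?k P z) V"
      "0 < \<rho>" "\<rho> \<le> 1 / (K + 1) * r" "p \<in> V \<inter> ball x0 r \<inter> nbhd \<rho> (zero_set ?k P)"
    note prems = this
    have "(K + 1) * \<rho> \<le> r" using prems(8) \<open>K > 0\<close> by (simp add: field_simps)
    moreover have "p \<in> V" "dist x0 p < r" using prems(9) by auto
    moreover obtain z where "z \<in> zero_set ?k P" "dist p z < \<rho>"
      using prems(9) unfolding nbhd_def by blast
    ultimately obtain e where "e \<in> V \<inter> zero_set ?k P" "dist p e < (K + 1) * \<rho>"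
      using zero_set_point_near_subspace_intersection[OF prems(4,2,6) less_imp_le[OF assms] K]
      by blast
    then show "p \<in> nbhd ((K + 1) * \<rho>) (V \<inter> zero_set ?k P)" unfolding nbhd_def by blast
  next
    show "K + 1 > 0" using \<open>K > 0\<close> by simp
  next
    show "1 / (K + 1) > 0" using \<open>K > 0\<close> by simp
  qed
qed

end
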